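(* Let $(X,D)$ be a nef toric pair and $\mathsf d$ an effective curve class with $\mathsf d\cdot D_j>0$ for all $j$. Then the set $\mathrm T(\mathfrak p)^X_{\mathsf d}$ consists of exactly one tropical curve $\Gamma$, namely the translate of the union of the rays of the fan of $X$ to the fixed point, and $\mathrm{Mult}(\Gamma)=1$.
   Context: $X=\prod_{i=1}^{r_X}\mathbb{P}^{G_i}(\mathsf w^{(i)})$ is a product of fake weighted projective spaces with fan $\Sigma\subset N_{\mathbb R}$, $N\cong\mathbb Z^{n_X}$, $M=\mathrm{Hom}(N,\mathbb Z)$; its rays $[D_1],\dots,[D_{l_D}]$, $l_D=n_X+r_X$, correspond to the toric divisors and have primitive generators $\Delta(j)$. (A fake weighted projective space $\mathbb P^G(\mathsf w)$, $\mathsf w=(w_1,\dots,w_{n+1})$ coprime positive integers, is the toric variety of the complete simplicial fan with rays spanned by primitive $\Delta(1),\dots,\Delta(n+1)\in N\cong\mathbb Z^n$ with $\sum w_k\Delta(k)=0$, and $G=N/\langle\Delta(k)\rangle$; $\Sigma$ is the product fan.) A genus $0$ degree $\mathsf d$ maximally tangent marked tropical curve in $X$ is (an isomorphism class of) a pair $(\Gamma,h)$: $\Gamma$ is a finite tree with some univalent vertices removed (giving non-compact edges), with no univalent or bivalent vertices, a weight $w:\Gamma^{[1]}\to\mathbb Z_{\ge0}$ on edges, non-compact edges being markings: weight-$0$ ones are interior markings $P_1$ (and $P_2$), and there is exactly one positive-weight non-compact edge (exterior marking) for each $j=1,\dots,l_D$; $h:\Gamma\to N_{\mathbb R}$ is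 proper continuous, constant on an edge iff its weight is $0$, otherwise an embedding onto a segment of a rational-slope line; at each vertex $V$ the balancing condition $\sum_{E\ni V}w(E)u_{(V,E)}=0$ holds ($u_{(V,E)}$ the primitive integral vector pointing from $h(V)$ along $h(E)$); the exterior marking for $D_j$ is parallel to $[D_j]$ (pointing in direction $\Delta(j)$) with weight $\mathsf d\cdot D_j$. An interior marking satisfies a $\psi^k$-condition if the vertex it is attached to is incident to exactly $k+2$ edges of positive weight. $\mathrm T(\mathfrak p)^X_{\mathsf d}$ is the set of such curves with one interior marking, mapped to a fixed general point of $N_{\mathbb R}$ and satisfying a $\psi^{n_X+r_X-2}$-condition. Multiplicity: let $A=\mathbb Z[N]\otimes\Lambda^\bullet M$ (elements $z^n\alpha$, product $z^{n}\alpha\cdot z^{n'}\beta=z^{n+n'}\alpha\wedge\beta$), and $\ell_k(z^{n_1}\alpha_1\otimes\cdots\otimes z^{n_k}\alpha_k)=z^{n_1+\cdots+n_k}\iota_{n_1+\cdots+n_k}(\alpha_1\wedge\cdots\wedge\alpha_k)$, $\iota$ contraction. Choose a sink vertex $V_\infty$ and orient edges toward it. Set $\zeta_E=z^{w(E)\Delta(j)}$ for the exterior marking of $D_j$, $\zeta_P$ a generator of $\Lambda^{n_X}M$ for an interior marking, and for a vertex $V\ne V_\infty$ with incoming edges $E_1,\dots,E_k$ and outgoing $E_{out}$, $\zeta_{E_{out}}=\ell_k(\zeta_{E_1}\otimes\cdots\otimes\zeta_{E_k})$ (all up to sign). Then $\zeta_\Gamma=\prod_{E\ni V_\infty}\zeta_E\in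 z^0\otimes\Lambda^{n_X}M$ and $\mathrm{Mult}(\Gamma)$ is its index in $\Lambda^{n_X}M$. *)

theory Defs
  imports "HOL-Analysis.Analysis"
begin

definition of_intv :: "int^'n::finite \<Rightarrow> real^'n" where
  "of_intv u = (\<chi> i. real_of_int (u $ i))"

definition primitive_vec :: "int^'n::finite \<Rightarrow> bool" where
  "primitive_vec u \<longleftrightarrow> Gcd (range (\<lambda>i. u $ i)) = 1"

text \<open>Data: r blocks (factors), l rays; ray j lies in block blk j, coordinate i of N
  belongs to block cblk i; w j is the weight of ray j in its factor.\<close>

definition fwps_product ::
  "nat \<Rightarrow> nat \<Rightarrow> (nat \<Rightarrow> int^'n::finite) \<Rightarrow> (nat \<Rightarrow> nat) \<Rightarrow> ('n \<Rightarrow> nat) \<Rightarrow> (nat \<Rightarrow> nat) \<Rightarrow> bool" where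
  "fwps_product r l \<Delta> blk cblk w \<longleftrightarrow>
     (\<forall>j<l. blk j < r) \<and> (\<forall>i. cblk i < r) \<and>
     (\<forall>j<l. \<forall>i. cblk i \<noteq> blk j \<longrightarrow> \<Delta> j $ i = 0) \<and>
     (\<forall>b<r. card {i. cblk i = b} \<ge> 1 \<and>
            card {j. j < l \<and> blk j = b} = card {i. cblk i = b} + 1) \<and>
     (\<forall>j<l. w j > 0 \<and> primitive_vec (\<Delta> j)) \<and>
     (\<forall>b<r. Gcd (w ` {j. j < l \<and> blk j = b}) = 1) \<and>
     (\<forall>b<r. (\<Sum>j\<in>{j. j < l \<and> blk j = b}. of_nat (w j) *s \<Delta> j) = 0) \<and>
     (\<forall>b<r. span (of_intv ` \<Delta> ` {j. j < l \<and> blk j = b}) = {x. \<forall>i. cblk i \<noteq> b \<longrightarrow> x $ i = 0})"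

text \<open>Vertices are natural numbers; compact edges are 2-element sets of vertices;
  tleg j is the vertex carrying the exterior marking for D_j; tmark the vertex carrying
  the interior marking P; tpos is h on vertices.\<close>

record ('n::finite) tcurve =
  tverts :: "nat set"
  tedges :: "nat set set"
  twt :: "nat set \<Rightarrow> nat"
  tleg :: "nat \<Rightarrow> nat"
  tmark :: nat
  tpos :: "nat \<Rightarrow> real^'n"

definition adj :: "nat set set \<Rightarrow> (nat \<times> nat) set" where
  "adj E = {(u, v). {u, v} \<in> E}"

definition prim_dir :: "real^'n::finite \<Rightarrow> int^'n" where
  "prim_dir x = (SOME u. primitive_vec u \<and> (\<exists>t>0. x = t *\<^sub>R of_intv u))"

definition tcurve_ok ::
  "nat \<Rightarrow> nat \<Rightarrow> (nat \<Rightarrow> int^'n::finite) \<Rightarrow> (nat \<Rightarrow> int) \<Rightarrow> real^'n \<Rightarrow> 'n tcurve \<Rightarrow> bool" where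
  "tcurve_ok r l \<Delta> c p \<Gamma> \<longleftrightarrow>
    (let V = tverts \<Gamma>; E = tedges \<Gamma> in
     finite V \<and> V \<noteq> {} \<and>
     (\<forall>e\<in>E. \<exists>u v. e = {u, v} \<and> u \<in> V \<and> v \<in> V \<and> u \<noteq> v) \<and>
     card E + 1 = card V \<and>
     (\<forall>u\<in>V. \<forall>v\<in>V. (u, v) \<in> (adj E)\<^sup>*) \<and>
     (\<forall>j<l. tleg \<Gamma> j \<in> V) \<and> tmark \<Gamma> \<in> V \<and>
     (\<forall>e\<in>E. twt \<Gamma> e > 0) \<and>
     (\<forall>v\<in>V. card {e\<in>E. v \<in> e} + card {j. j < l \<and> tleg \<Gamma> j = v}
              + (if tmark \<Gamma> = v then 1 else 0) \<ge> 3) \<and>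
     (\<forall>u v. {u, v} \<in> E \<longrightarrow> tpos \<Gamma> u \<noteq> tpos \<Gamma> v \<and>
              (\<exists>a::int^'n. \<exists>t>0. tpos \<Gamma> v - tpos \<Gamma> u = t *\<^sub>R of_intv a)) \<and>
     (\<forall>v\<in>V. (\<Sum>u\<in>{u. {u, v} \<in> E}. real (twt \<Gamma> {u, v}) *\<^sub>R of_intv (prim_dir (tpos \<Gamma> u - tpos \<Gamma> v)))
            + (\<Sum>j\<in>{j. j < l \<and> tleg \<Gamma> j = v}. real_of_int (c j) *\<^sub>R of_intv (\<Delta> j)) = 0) \<and>
     tpos \<Gamma> (tmark \<Gamma>) = p \<and>
     card {e\<in>E. tmark \<Gamma> \<in> e} + card {j. j < l \<and> tleg \<Gamma> j = tmark \<Gamma>} = CARD('n) + r)"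

definition tcurve_iso :: "nat \<Rightarrow> ('n::finite) tcurve \<Rightarrow> 'n tcurve \<Rightarrow> bool" where
  "tcurve_iso l \<Gamma> \<Gamma>' \<longleftrightarrow> (\<exists>f. bij_betw f (tverts \<Gamma>) (tverts \<Gamma>') \<and>
     (\<forall>u\<in>tverts \<Gamma>. \<forall>v\<in>tverts \<Gamma>. {u, v} \<in> tedges \<Gamma> \<longleftrightarrow> {f u, f v} \<in> tedges \<Gamma>') \<and>
     (\<forall>u\<in>tverts \<Gamma>. \<forall>v\<in>tverts \<Gamma>. {u, v} \<in> tedges \<Gamma> \<longrightarrow> twt \<Gamma>' {f u, f v} = twt \<Gamma> {u, v}) \<and>
     (\<forall>j<l. tleg \<Gamma>' j = f (tleg \<Gamma> j)) \<and> tmark \<Gamma>' = f (tmark \<Gamma>) \<and>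
     (\<forall>v\<in>tverts \<Gamma>. tpos \<Gamma>' (f v) = tpos \<Gamma> v))"

text \<open>The translate to p of the union of the rays of the fan: one vertex at p carrying
  all markings.\<close>

definition star_curve :: "real^'n::finite \<Rightarrow> 'n tcurve" where
  "star_curve p = \<lparr>tverts = {0}, tedges = {}, twt = (\<lambda>_. 0), tleg = (\<lambda>_. 0),
                   tmark = 0, tpos = (\<lambda>_. p)\<rparr>"

text \<open>Lambda^k M is represented by integer-valued alternating k-linear forms on N
  (functions of lists of length k); a form is a pair (degree, function).\<close>

type_synonym 'n form = "nat \<times> ((int^'n) list \<Rightarrow> int)"
type_synonym 'n mono = "(int^'n) \<times> 'n form"

definition wedge :: "('n::finite) form \<Rightarrow> 'n form \<Rightarrow> 'n form" where
  "wedge a b = (case a of (k, f) \<Rightarrow> case b of (m, g) \<Rightarrow>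
     (k + m, \<lambda>vs. \<Sum>S\<in>{S. S \<subseteq> {0..<k+m} \<and> card S = k}.
        (-1) ^ (\<Sum>S - k * (k - 1) div 2) * f (nths vs S) * g (nths vs ({0..<k+m} - S))))"

definition contract :: "int^'n::finite \<Rightarrow> 'n form \<Rightarrow> 'n form" where
  "contract n a = (case a of (k, f) \<Rightarrow> (k - 1, \<lambda>vs. if k = 0 then 0 else f (n # vs)))"

definition mono_unit :: "('n::finite) mono" where
  "mono_unit = (0, (0, \<lambda>_. 1))"

definition mmul :: "('n::finite) mono \<Rightarrow> 'n mono \<Rightarrow> 'n mono" where
  "mmul x y = (fst x + fst y, wedge (snd x) (snd y))"

definition prodl :: "('n::finite) mono list \<Rightarrow> 'n mono" where
  "prodl zs = foldr mmul zs mono_unit"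

definition ell :: "('n::finite) mono list \<Rightarrow> 'n mono" where
  "ell zs = (case prodl zs of (n, a) \<Rightarrow> (n, contract n a))"

definition nord :: "('n::finite) list" where
  "nord = (SOME xs. distinct xs \<and> set xs = UNIV)"

definition detform :: "(int^'n::finite) list \<Rightarrow> int" where
  "detform vs = det (\<chi> i j. (vs ! (THE k. k < length (nord::'n list) \<and> nord ! k = i)) $ j)"

definition zetaP :: "('n::finite) mono" where
  "zetaP = (0, (CARD('n), detform))"

definition incoming :: "nat \<Rightarrow> (nat \<Rightarrow> int^'n::finite) \<Rightarrow> (nat \<Rightarrow> int) \<Rightarrow> 'n tcurve \<Rightarrow> nat \<Rightarrow> 'n mono list" where
  "incoming l \<Delta> c \<Gamma> v =
     map (\<lambda>j. (c j *s \<Delta> j, (0, \<lambda>_. 1))) (filter (\<lambda>j. tleg \<Gamma> j = v) [0..<l])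
     @ (if tmark \<Gamma> = v then [zetaP] else [])"

text \<open>u is a child of v w.r.t. the sink s: edge {u,v}, and v lies on the side of s.\<close>
definition child :: "nat set set \<Rightarrow> nat \<Rightarrow> nat \<Rightarrow> nat \<Rightarrow> bool" where
  "child E s v u \<longleftrightarrow> {u, v} \<in> E \<and> (v, s) \<in> (adj (E - {{u, v}}))\<^sup>*"

fun zeta :: "nat \<Rightarrow> (nat \<Rightarrow> int^'n::finite) \<Rightarrow> (nat \<Rightarrow> int) \<Rightarrow> 'n tcurve \<Rightarrow> nat \<Rightarrow> nat \<Rightarrow> nat \<Rightarrow> 'n mono" where
  "zeta l \<Delta> c \<Gamma> s 0 v = mono_unit"
| "zeta l \<Delta> c \<Gamma> s (Suc k) v =
     ell (incoming l \<Delta> c \<Gamma> v @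
          map (zeta l \<Delta> c \<Gamma> s k) (sorted_list_of_set {u. child (tedges \<Gamma>) s v u}))"

text \<open>Mult: sink = least vertex; zeta_Gamma = product over edges at the sink; its index in
  Lambda^n M = |coefficient w.r.t. the generator|, read off by evaluating on a basis.\<close>
definition tmult :: "nat \<Rightarrow> (nat \<Rightarrow> int^'n::finite) \<Rightarrow> (nat \<Rightarrow> int) \<Rightarrow> 'n tcurve \<Rightarrow> nat" where
  "tmult l \<Delta> c \<Gamma> =
    (let s = Min (tverts \<Gamma>);
         zs = incoming l \<Delta> c \<Gamma> s @
              map (zeta l \<Delta> c \<Gamma> s (card (tverts \<Gamma>))) (sorted_list_of_set {u. child (tedges \<Gamma>) s s u})
     in nat \<bar>snd (snd (prodl zs)) (map (\<lambda>i. axis i 1) (nord::'n list))\<bar>)"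

end

theory Submission
  imports Defs
begin

text \<open>Every vertex of a tropical curve other than the one carrying the interior marking has
  at least three incident edges and legs, while the \<open>\<psi>\<^sup>n\<^sup>+\<^sup>r\<^sup>-\<^sup>2\<close>-condition puts
  \<open>n + r\<close> of them at the marked vertex. A product of \<open>r\<close> fake weighted projective spaces of
  total dimension \<open>n\<close> has exactly \<open>n + r\<close> rays, so the marked vertex carries as many flags as
  there are legs altogether. Counting flags then gives \<open>2|E| + (n + r) \<ge> 3|E| + (n + r)\<close> for a tree, hence there is no
  compact edge and the curve is the star of the fan placed at the point. Its multiplicity is
  computed at the single vertex: all leg factors lie in degree \<open>0\<close> of the exterior algebra,
  so \<open>\<zeta>\<^sub>\<Gamma>\<close> is the generator of \<open>\<Lambda>\<^sup>nM\<close> carried by the interior marking.\<close>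

lemma card_eq_sum_card_fibers:
  assumes "finite A" "finite B" "f ` A \<subseteq> B"
  shows "card A = (\<Sum>b\<in>B. card {a\<in>A. f a = b})"
  using sum.group[OF assms, of "\<lambda>_. 1 :: nat"] by simp

lemma fwps_product_card_rays:
  fixes cblk :: "'n::finite \<Rightarrow> nat"
  assumes "fwps_product r l \<Delta> blk cblk w"
  shows "l = CARD('n) + r"
proof -
  have blk: "\<forall>j<l. blk j < r" and cblk: "\<forall>i. cblk i < r"
    and rays: "\<forall>b<r. card {j. j < l \<and> blk j = b} = card {i. cblk i = b} + 1"
    using assms unfolding fwps_product_def by auto
  have "l = (\<Sum>b<r. card {j\<in>{..<l}. blk j = b})"
    using card_eq_sum_card_fibers[of "{..<l}" "{..<r}" blk] blk by auto
  also have "\<dots> = (\<Sum>b<r. card {i\<in>UNIV. cblk i = b} + 1)"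
    using rays by (intro sum.cong) auto
  also have "\<dots> = CARD('n) + r"
  proof -
    have "CARD('n) = (\<Sum>b<r. card {i\<in>UNIV. cblk i = b})"
      using card_eq_sum_card_fibers[of UNIV "{..<r}" cblk] cblk by auto
    then show ?thesis by (subst sum.distrib) simp
  qed
  finally show ?thesis .
qed

lemma fwps_product_has_blocks:
  fixes cblk :: "'n::finite \<Rightarrow> nat"
  assumes "fwps_product r l \<Delta> blk cblk w"
  shows "0 < r"
  using assms unfolding fwps_product_def by auto

lemma of_intv_sum:
  "of_intv (\<Sum>j\<in>A. c j *s \<Delta> j) = (\<Sum>j\<in>A. real_of_int (c j) *\<^sub>R of_intv (\<Delta> j))"
  unfolding of_intv_def
  by (induction A rule: infinite_finite_induct) (auto simp: vec_eq_iff algebra_simps)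

lemma tcurve_ok_star_curve:
  fixes \<Delta> :: "nat \<Rightarrow> int^'n::finite"
  assumes "fwps_product r l \<Delta> blk cblk w"
    and balanced: "(\<Sum>j<l. c j *s \<Delta> j) = 0"
  shows "tcurve_ok r l \<Delta> c p (star_curve p)"
proof -
  have l: "l = CARD('n) + r" and "0 < r"
    using fwps_product_card_rays[OF assms(1)] fwps_product_has_blocks[OF assms(1)] .
  then have "3 \<le> l + 1"
    using zero_less_card_finite[where 'a='n] by linarith
  moreover have "(\<Sum>j<l. real_of_int (c j) *\<^sub>R of_intv (\<Delta> j)) = 0"
    using of_intv_sum[of c \<Delta> "{..<l}"] balanced by (simp add: of_intv_def vec_eq_iff)
  moreover have "{j. j < l} = {..<l}" by auto
  ultimately show ?thesis
    using l unfolding tcurve_ok_def star_curve_def by (simp add: adj_def)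
qed

lemma sum_card_incident_edges:
  assumes "finite V" and "\<forall>e\<in>E. \<exists>u v. e = {u, v} \<and> u \<in> V \<and> v \<in> V \<and> u \<noteq> v"
  shows "(\<Sum>v\<in>V. card {e\<in>E. v \<in> e}) = 2 * card E"
proof -
  have "finite E"
    using assms by (intro finite_subset[of E "Pow V"]) auto
  then have "(\<Sum>v\<in>V. card {e\<in>E. v \<in> e}) = (\<Sum>v\<in>V. \<Sum>e\<in>E. if v \<in> e then 1 else 0)"
    by (simp add: sum.inter_filter[symmetric])
  also have "\<dots> = (\<Sum>e\<in>E. \<Sum>v\<in>V. if v \<in> e then 1 else 0)"
    by (rule sum.swap)
  also have "\<dots> = (\<Sum>e\<in>E. card {v\<in>V. v \<in> e})"
    using \<open>finite V\<close> by (simp add: sum.inter_filter[symmetric])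
  also have "\<dots> = (\<Sum>e\<in>E. 2)"
  proof (rule sum.cong)
    fix e assume "e \<in> E"
    then obtain u v where "e = {u, v}" "u \<in> V" "v \<in> V" "u \<noteq> v" using assms(2) by blast
    then have "{v\<in>V. v \<in> e} = {u, v}" by auto
    then show "card {v\<in>V. v \<in> e} = 2" using \<open>u \<noteq> v\<close> by simp
  qed simp
  finally show ?thesis by simp
qed

lemma tcurve_ok_single_vertex:
  fixes \<Delta> :: "nat \<Rightarrow> int^'n::finite"
  assumes "fwps_product r l \<Delta> blk cblk w" and "tcurve_ok r l \<Delta> c p \<Gamma>"
  shows "tedges \<Gamma> = {}" and "tverts \<Gamma> = {tmark \<Gamma>}"
proof -
  define V E m where "V = tverts \<Gamma>" and "E = tedges \<Gamma>" and "m = tmark \<Gamma>"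
  define flags where "flags v = card {e\<in>E. v \<in> e} + card {j. j < l \<and> tleg \<Gamma> j = v}" for v
  have finV: "finite V"
    and edges: "\<forall>e\<in>E. \<exists>u v. e = {u, v} \<and> u \<in> V \<and> v \<in> V \<and> u \<noteq> v"
    and tree: "card E + 1 = card V"
    and legs: "\<forall>j<l. tleg \<Gamma> j \<in> V" and "m \<in> V"
    and stable: "\<forall>v\<in>V. flags v + (if m = v then 1 else 0) \<ge> 3"
    and psi: "flags m = CARD('n) + r"
    using assms(2) unfolding tcurve_ok_def Let_def V_def E_def m_def flags_def by auto
  have flags_m: "flags m = l"
    using psi fwps_product_card_rays[OF assms(1)] by simp
  have "tleg \<Gamma> ` {..<l} \<subseteq> V" using legs by auto
  then have "(\<Sum>v\<in>V. card {j. j < l \<and> tleg \<Gamma> j = v}) = l"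
    using card_eq_sum_card_fibers[of "{..<l}" V "tleg \<Gamma>"] finV by simp
  then have "2 * card E + l = (\<Sum>v\<in>V. flags v)"
    using sum_card_incident_edges[OF finV edges] by (simp add: flags_def sum.distrib)
  also have "\<dots> = l + (\<Sum>v\<in>V - {m}. flags v)"
    using sum.remove[OF finV \<open>m \<in> V\<close>, of flags] flags_m by simp
  also have "(\<Sum>v\<in>V - {m}. flags v) \<ge> (\<Sum>v\<in>V - {m}. 3)"
    using stable by (intro sum_mono) auto
  moreover have "(\<Sum>v\<in>V - {m}. (3::nat)) = 3 * card E"
    using tree finV \<open>m \<in> V\<close> by simp
  ultimately have "card E = 0" by linarith
  moreover have "finite E"
    using finV edges by (intro finite_subset[of E "Pow V"]) auto
  ultimately show "tedges \<Gamma> = {}" unfolding E_def by simp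
  with tree \<open>m \<in> V\<close> show "tverts \<Gamma> = {tmark \<Gamma>}"
    unfolding V_def E_def m_def by (metis card_1_singletonE add_0 card.empty singletonD)
qed

lemma tcurve_ok_iso_star_curve:
  fixes \<Delta> :: "nat \<Rightarrow> int^'n::finite"
  assumes "fwps_product r l \<Delta> blk cblk w" and ok: "tcurve_ok r l \<Delta> c p \<Gamma>"
  shows "tcurve_iso l \<Gamma> (star_curve p)"
proof -
  have "tedges \<Gamma> = {}" and V: "tverts \<Gamma> = {tmark \<Gamma>}"
    using tcurve_ok_single_vertex[OF assms] by auto
  moreover have "\<forall>j<l. tleg \<Gamma> j = tmark \<Gamma>" and "tpos \<Gamma> (tmark \<Gamma>) = p"
    using ok V unfolding tcurve_ok_def Let_def by auto
  ultimately show ?thesis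
    unfolding tcurve_iso_def star_curve_def
    by (intro exI[of _ "\<lambda>_. 0"]) (simp add: bij_betw_def)
qed

lemma sum_lessThan_nat: "\<Sum>{..<n} = n * (n - 1) div (2::nat)"
  using gauss_sum_nat[of "n - 1"] by (cases n) (simp_all add: atLeast0AtMost lessThan_Suc_atMost)

lemma wedge_unit_left: "wedge (0, \<lambda>_. 1) (k, f) = (k, \<lambda>vs. f (take k vs))"
proof -
  have "{S. S \<subseteq> {..<k} \<and> card S = 0} = {{}}" by (auto dest: finite_subset)
  then show ?thesis unfolding wedge_def by (simp add: atLeast0LessThan)
qed

lemma wedge_unit_right: "wedge (k, f) (0, \<lambda>_. 1) = (k, \<lambda>vs. f (take k vs))"
proof -
  have "{S. S \<subseteq> {..<k} \<and> card S = k} = {{..<k}}"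
    using card_subset_eq[of "{..<k}"] by auto
  then show ?thesis unfolding wedge_def by (simp add: sum_lessThan_nat atLeast0LessThan)
qed

lemma snd_foldr_mmul_degree_zero:
  assumes "\<forall>x\<in>set xs. snd x = (0, \<lambda>_. 1)" and "snd y = (k, g)" and "\<forall>vs. g (take k vs) = g vs"
  shows "snd (foldr mmul xs y) = (k, g)"
  using assms(1)
  by (induction xs) (simp_all add: assms(2,3) mmul_def wedge_unit_left)

lemma nord_enumerates_UNIV: "distinct (nord :: 'n::finite list)" "set (nord :: 'n list) = UNIV"
proof -
  have "\<exists>xs :: 'n list. distinct xs \<and> set xs = UNIV"
    using finite_distinct_list[of "UNIV :: 'n set"] by auto
  then have "distinct (nord :: 'n list) \<and> set (nord :: 'n list) = UNIV"
    unfolding nord_def by (rule someI_ex)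
  then show "distinct (nord :: 'n list)" "set (nord :: 'n list) = UNIV" by auto
qed

lemma length_nord: "length (nord :: 'n::finite list) = CARD('n)"
  using nord_enumerates_UNIV distinct_card by metis

lemma nord_nth_index:
  "map (\<lambda>i. axis i (1::int)) (nord :: 'n::finite list) ! (THE k. k < length (nord :: 'n list) \<and> nord ! k = i)
     = axis i 1"
proof -
  obtain k where k: "k < length (nord :: 'n list)" "nord ! k = i"
    using nord_enumerates_UNIV(2) by (metis UNIV_I in_set_conv_nth)
  then have "(THE k. k < length (nord :: 'n list) \<and> nord ! k = i) = k"
    using nord_enumerates_UNIV(1) by (metis (mono_tags, lifting) nth_eq_iff_index_eq the_equality)
  then show ?thesis using k by simp
qed

lemma detform_standard_basis: "detform (map (\<lambda>i. axis i 1) (nord :: 'n::finite list)) = 1"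
proof -
  have "(\<chi> i j. (map (\<lambda>i. axis i 1) (nord :: 'n list) ! (THE k. k < length (nord :: 'n list) \<and> nord ! k = i)) $ j)
      = (\<chi> i j. axis i (1::int) $ j)"
    by (simp only: nord_nth_index)
  also have "\<dots> = mat 1"
    by (simp add: vec_eq_iff mat_def axis_def)
  finally show ?thesis
    unfolding detform_def by simp
qed

lemma tmult_star_curve: "tmult l \<Delta> c (star_curve p :: 'n::finite tcurve) = 1"
proof -
  let ?legs = "map (\<lambda>j. (c j *s \<Delta> j, (0::nat, \<lambda>_::(int^'n) list. 1::int))) [0..<l]"
  have sink: "Min (tverts (star_curve p :: 'n tcurve)) = 0"
    and no_edges: "tedges (star_curve p :: 'n tcurve) = {}"
    and no_children: "{u. child {} 0 0 u} = {}"
    by (simp_all add: star_curve_def child_def)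
  have marking: "snd (mmul (zetaP :: 'n mono) mono_unit) = (CARD('n), \<lambda>vs. detform (take CARD('n) vs))"
    by (simp add: mmul_def zetaP_def mono_unit_def wedge_unit_right)
  have "incoming l \<Delta> c (star_curve p) 0 = ?legs @ [zetaP]"
    unfolding incoming_def star_curve_def by simp
  moreover have "snd (prodl (?legs @ [zetaP])) = (CARD('n), \<lambda>vs. detform (take CARD('n) vs))"
    unfolding prodl_def using snd_foldr_mmul_degree_zero[OF _ marking] by simp
  ultimately show ?thesis
    unfolding tmult_def Let_def sink no_edges
    by (simp add: no_children length_nord detform_standard_basis)
qed

text \<open>The conclusion holds for every point, so the exceptional set is empty.\<close>

theorem proposition5p1:
  fixes r l :: nat and \<Delta> :: "nat \<Rightarrow> int^'n::finite"
    and blk :: "nat \<Rightarrow> nat" and cblk :: "'n \<Rightarrow> nat" and w :: "nat \<Rightarrow> nat"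
    and c :: "nat \<Rightarrow> int"
  assumes "fwps_product r l \<Delta> blk cblk w"
    and "\<forall>j<l. c j > 0"
    and "(\<Sum>j<l. c j *s \<Delta> j) = 0"
  shows "\<exists>Z. Z \<in> null_sets lborel \<and>
           (\<forall>p. p \<notin> Z \<longrightarrow>
              tcurve_ok r l \<Delta> c p (star_curve p) \<and>
              (\<forall>\<Gamma>. tcurve_ok r l \<Delta> c p \<Gamma> \<longrightarrow> tcurve_iso l \<Gamma> (star_curve p)) \<and>
              tmult l \<Delta> c (star_curve p) = 1)"
proof -
  have "tcurve_ok r l \<Delta> c p (star_curve p) \<and>
        (\<forall>\<Gamma>. tcurve_ok r l \<Delta> c p \<Gamma> \<longrightarrow> tcurve_iso l \<Gamma> (star_curve p)) \<and>
        tmult l \<Delta> c (star_curve p) = 1" for p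
    using tcurve_ok_star_curve[OF assms(1,3)] tcurve_ok_iso_star_curve[OF assms(1)] tmult_star_curve
    by blast
  then show ?thesis by (intro exI[of _ "{}"]) simp
qed

end
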